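(* Let $\mathbb{L}$ be a complete lattice, let $E^1,E^2$ be bounded spectral families in $\mathbb{L}$, and define $E_{\lambda,\mu}:=E^1_\lambda\wedge E^2_\mu$ for $\lambda,\mu\in\mathbb{R}$. Then $E=(E_{\lambda,\mu})_{\lambda,\mu\in\mathbb{R}}$ is a bounded complex spectral family, and the function associated to $E$ is $f_E=f_{E^1}+i\,f_{E^2}$.
   Context: A spectral family in $\mathbb{L}$ (with $0$, $1$) is a map $F:\mathbb{R}\to\mathbb{L}$ with $F_\lambda\le F_\mu$ for $\lambda\le\mu$, $F_\lambda=\bigwedge_{\mu>\lambda}F_\mu$, $\bigwedge_\lambda F_\lambda=0$, $\bigvee_\lambda F_\lambda=1$; it is bounded if there are $a\le b$ with $F_\lambda=0$ for $\lambda<a$ and $F_\lambda=1$ for $\lambda\ge b$; its associated function on the Stone spectrum is $f_F(\mathfrak{B})=\inf\{\lambda\mid F_\lambda\in\mathfrak{B}\}$. The Stone spectrum $\mathcal{Q}(\mathbb{L})$ is the set of quasipoints (maximal dual ideals: maximal nonempty upward closed subsets not containing $0$, closed under finite meets) with the topology generated by $\{\mathfrak{B}\mid a\in\mathfrak{B}\}$, $a\in\mathbb{L}$. A complex (2-parameter) spectral family is a map $E:\mathbb{R}^2\to\mathbb{L}$ with (i) $E_{\lambda_1,\lambda_2}\wedge E_{\mu_1,\mu_2}=E_{\min\{\lambda_1,\mu_1\},\min\{\lambda_2,\mu_2\}}$; (ii) $\bigwedge_{\lambda_1<\mu_1,\lambda_2<\mu_2}E_{\mu_1,\mu_2}=E_{\lambda_1,\lambda_2}$;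 (iii) $\bigwedge_{\lambda}E_{\lambda,\lambda_2}=0=\bigwedge_\lambda E_{\lambda_1,\lambda}$ for all $\lambda_1,\lambda_2$, and $\bigvee_{\lambda_1,\lambda_2}E_{\lambda_1,\lambda_2}=1$. It is bounded if there are $m,M'$ with $E_{\lambda_1,\lambda_2}=0$ whenever some $\lambda_k\le m$ and $E_{\lambda_1,\lambda_2}=1$ whenever $\lambda_1,\lambda_2\ge M'$. For such $E$, $f_E:\mathcal{Q}(\mathbb{L})\to\mathbb{C}$ is $f_E=f_{E,1}+if_{E,2}$ with $f_{E,1}(\mathfrak{B})=\inf\{\lambda\mid\exists\mu: E_{\lambda,\mu}\in\mathfrak{B}\}$ and $f_{E,2}(\mathfrak{B})=\inf\{\mu\mid\exists\lambda: E_{\lambda,\mu}\in\mathfrak{B}\}$. *)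

theory Defs
  imports Complex_Main
begin

definition spectral_family :: "(real \<Rightarrow> 'a::complete_lattice) \<Rightarrow> bool" where
  "spectral_family F \<longleftrightarrow>
     (\<forall>l u. l \<le> u \<longrightarrow> F l \<le> F u) \<and>
     (\<forall>l. F l = Inf (F ` {u. u > l})) \<and>
     Inf (range F) = bot \<and> Sup (range F) = top"

definition bounded_spectral_family :: "(real \<Rightarrow> 'a::complete_lattice) \<Rightarrow> bool" where
  "bounded_spectral_family F \<longleftrightarrow> spectral_family F \<and>
     (\<exists>a b. a \<le> b \<and> (\<forall>l. l < a \<longrightarrow> F l = bot) \<and> (\<forall>l. l \<ge> b \<longrightarrow> F l = top))"

definition dual_ideal :: "'a::complete_lattice set \<Rightarrow> bool" where
  "dual_ideal B \<longleftrightarrow> B \<noteq> {} \<and> bot \<notin> B \<and>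
     (\<forall>a b. a \<in> B \<and> a \<le> b \<longrightarrow> b \<in> B) \<and>
     (\<forall>a b. a \<in> B \<and> b \<in> B \<longrightarrow> inf a b \<in> B)"

definition quasipoint :: "'a::complete_lattice set \<Rightarrow> bool" where
  "quasipoint B \<longleftrightarrow> dual_ideal B \<and> (\<forall>C. dual_ideal C \<and> B \<subseteq> C \<longrightarrow> C = B)"

text \<open>The Stone spectrum as a set of quasipoints (the topology is not needed here).\<close>
definition stone_spectrum :: "'a::complete_lattice set set" where
  "stone_spectrum = {B. quasipoint B}"

definition assoc_fun :: "(real \<Rightarrow> 'a::complete_lattice) \<Rightarrow> 'a set \<Rightarrow> real" where
  "assoc_fun F B = Inf {l. F l \<in> B}"

definition complex_spectral_family :: "(real \<Rightarrow> real \<Rightarrow> 'a::complete_lattice) \<Rightarrow> bool" where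
  "complex_spectral_family E \<longleftrightarrow>
     (\<forall>l1 l2 m1 m2. inf (E l1 l2) (E m1 m2) = E (min l1 m1) (min l2 m2)) \<and>
     (\<forall>l1 l2. Inf {E m1 m2 | m1 m2. l1 < m1 \<and> l2 < m2} = E l1 l2) \<and>
     (\<forall>l2. Inf {E l l2 | l. True} = bot) \<and>
     (\<forall>l1. Inf {E l1 l | l. True} = bot) \<and>
     Sup {E l1 l2 | l1 l2. True} = top"

definition bounded_complex_spectral_family :: "(real \<Rightarrow> real \<Rightarrow> 'a::complete_lattice) \<Rightarrow> bool" where
  "bounded_complex_spectral_family E \<longleftrightarrow> complex_spectral_family E \<and>
     (\<exists>m M'. (\<forall>l1 l2. (l1 \<le> m \<or> l2 \<le> m) \<longrightarrow> E l1 l2 = bot) \<and>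
             (\<forall>l1 l2. (l1 \<ge> M' \<and> l2 \<ge> M') \<longrightarrow> E l1 l2 = top))"

definition assoc_fun_re :: "(real \<Rightarrow> real \<Rightarrow> 'a::complete_lattice) \<Rightarrow> 'a set \<Rightarrow> real" where
  "assoc_fun_re E B = Inf {l. \<exists>u. E l u \<in> B}"

definition assoc_fun_im :: "(real \<Rightarrow> real \<Rightarrow> 'a::complete_lattice) \<Rightarrow> 'a set \<Rightarrow> real" where
  "assoc_fun_im E B = Inf {u. \<exists>l. E l u \<in> B}"

definition assoc_fun_complex :: "(real \<Rightarrow> real \<Rightarrow> 'a::complete_lattice) \<Rightarrow> 'a set \<Rightarrow> complex" where
  "assoc_fun_complex E B = Complex (assoc_fun_re E B) (assoc_fun_im E B)"

end

theory Submission
  imports Defs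
begin

text \<open>Monotonicity turns meets of values of \<open>E\<^sub>\<lambda>\<^sub>\<mu> = E\<^sup>1\<^sub>\<lambda> \<sqinter> E\<^sup>2\<^sub>\<mu>\<close> into \<open>min\<close> of
  the indices, and an infimum of \<open>E\<^sup>1\<^sub>x \<sqinter> E\<^sup>2\<^sub>y\<close> over a product of index sets splits into
  the meet of the two infima, which gives right continuity. Without distributivity a join of
  meets need not be \<open>1\<close>, so for \<open>\<Squnion> E = 1\<close> boundedness is used: both families actually
  reach \<open>1\<close>. For the same reason, and since quasipoints are upward closed,
  \<open>E\<^sup>1\<^sub>\<lambda> \<sqinter> E\<^sup>2\<^sub>\<mu> \<in> \<B>\<close> for some \<open>\<mu>\<close> iff \<open>E\<^sup>1\<^sub>\<lambda> \<in> \<B>\<close>; hence the real and imaginary parts of \<open>f\<^sub>E\<close>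
  are \<open>f\<^sub>E\<^sub>1\<close> and \<open>f\<^sub>E\<^sub>2\<close>.\<close>

lemma spectral_familyD:
  assumes "spectral_family F"
  shows spectral_family_mono: "mono F"
    and spectral_family_right_continuous: "F l = Inf (F ` {l<..})"
    and spectral_family_Inf_range: "Inf (range F) = bot"
  using assms unfolding spectral_family_def mono_def greaterThan_def by blast+

lemma bounded_spectral_familyE:
  assumes "bounded_spectral_family F"
  obtains a b where "spectral_family F" "\<forall>l<a. F l = bot" "\<forall>l\<ge>b. F l = top"
  using assms unfolding bounded_spectral_family_def by blast

lemma bounded_spectral_family_top:
  assumes "bounded_spectral_family F"
  shows "top \<in> range F"
proof -
  obtain a b where "\<forall>l\<ge>b. F l = top"
    using assms by (rule bounded_spectral_familyE)
  then show ?thesis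
    by (metis order_refl rangeI)
qed

lemma inf_mono_min:
  fixes F :: "'a::linorder \<Rightarrow> 'b::semilattice_inf"
  assumes "mono F"
  shows "inf (F x) (F y) = F (min x y)"
  using assms by (cases "x \<le> y") (auto simp: min_def mono_def inf_absorb1 inf_absorb2)

lemma INF_inf_Times:
  fixes f :: "'a \<Rightarrow> 'c::complete_lattice" and g :: "'b \<Rightarrow> 'c"
  assumes "A \<noteq> {}" "C \<noteq> {}"
  shows "(INF p\<in>A \<times> C. inf (f (fst p)) (g (snd p))) = inf (Inf (f ` A)) (Inf (g ` C))"
proof -
  have "(INF p\<in>A \<times> C. inf (f (fst p)) (g (snd p))) =
        inf (Inf ((f \<circ> fst) ` (A \<times> C))) (Inf ((g \<circ> snd) ` (A \<times> C)))"
    by (simp add: INF_inf_distrib)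
  also have "\<dots> = inf (Inf (f ` A)) (Inf (g ` C))"
    using assms by (simp only: image_comp [symmetric] fst_image_times snd_image_times if_False)
  finally show ?thesis .
qed

lemma complex_spectral_family_inf:
  fixes F G :: "real \<Rightarrow> 'a::complete_lattice"
  assumes F: "spectral_family F" and G: "spectral_family G"
    and "top \<in> range F" "top \<in> range G"
  shows "complex_spectral_family (\<lambda>l u. inf (F l) (G u))"
  unfolding complex_spectral_family_def
proof (intro conjI allI)
  fix l1 l2 m1 m2
  show "inf (inf (F l1) (G l2)) (inf (F m1) (G m2)) = inf (F (min l1 m1)) (G (min l2 m2))"
    using inf_mono_min [OF spectral_family_mono [OF F], of l1 m1]
      inf_mono_min [OF spectral_family_mono [OF G], of l2 m2]
    by (metis inf_assoc inf_left_commute)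
next
  fix l1 l2
  have "{inf (F m1) (G m2) | m1 m2. l1 < m1 \<and> l2 < m2} =
        (\<lambda>p. inf (F (fst p)) (G (snd p))) ` ({l1<..} \<times> {l2<..})"
    by force
  then show "Inf {inf (F m1) (G m2) | m1 m2. l1 < m1 \<and> l2 < m2} = inf (F l1) (G l2)"
    by (simp add: INF_inf_Times spectral_family_right_continuous [OF F, symmetric]
        spectral_family_right_continuous [OF G, symmetric])
next
  fix l2
  have "Inf {inf (F l) (G l2) | l. True} \<le> Inf (range F)"
    by (rule Inf_mono) (blast intro: inf_le1 inf_le2)
  then show "Inf {inf (F l) (G l2) | l. True} = bot"
    by (simp add: spectral_family_Inf_range [OF F] bot_unique)
next
  fix l1
  have "Inf {inf (F l1) (G l) | l. True} \<le> Inf (range G)"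
    by (rule Inf_mono) (blast intro: inf_le1 inf_le2)
  then show "Inf {inf (F l1) (G l) | l. True} = bot"
    by (simp add: spectral_family_Inf_range [OF G] bot_unique)
next
  obtain b c where "F b = top" "G c = top"
    using \<open>top \<in> range F\<close> \<open>top \<in> range G\<close> by (metis rangeE)
  then have "top \<in> {inf (F l1) (G l2) | l1 l2. True}"
    by force
  then show "Sup {inf (F l1) (G l2) | l1 l2. True} = top"
    by (metis Sup_upper top_unique)
qed

lemma bounded_complex_spectral_family_inf:
  fixes F G :: "real \<Rightarrow> 'a::complete_lattice"
  assumes "bounded_spectral_family F" "bounded_spectral_family G"
  shows "bounded_complex_spectral_family (\<lambda>l u. inf (F l) (G u))"
proof -
  obtain a1 b1 where F: "spectral_family F"
    and F_bot: "\<forall>l<a1. F l = bot" and F_top: "\<forall>l\<ge>b1. F l = top"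
    using assms(1) by (rule bounded_spectral_familyE)
  obtain a2 b2 where G: "spectral_family G"
    and G_bot: "\<forall>l<a2. G l = bot" and G_top: "\<forall>l\<ge>b2. G l = top"
    using assms(2) by (rule bounded_spectral_familyE)
  have "complex_spectral_family (\<lambda>l u. inf (F l) (G u))"
    using F G assms by (intro complex_spectral_family_inf bounded_spectral_family_top)
  moreover have "\<forall>l1 l2. (l1 \<le> min a1 a2 - 1 \<or> l2 \<le> min a1 a2 - 1) \<longrightarrow> inf (F l1) (G l2) = bot"
    using F_bot G_bot by fastforce
  moreover have "\<forall>l1 l2. (l1 \<ge> max b1 b2 \<and> l2 \<ge> max b1 b2) \<longrightarrow> inf (F l1) (G l2) = top"
    using F_top G_top by simp
  ultimately show ?thesis
    unfolding bounded_complex_spectral_family_def by blast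
qed

lemma dual_ideal_upward_closed:
  assumes "dual_ideal B" "x \<in> B" "x \<le> y"
  shows "y \<in> B"
  using assms unfolding dual_ideal_def by blast

lemma assoc_fun_re_inf:
  assumes "dual_ideal B" "top \<in> range G"
  shows "assoc_fun_re (\<lambda>l u. inf (F l) (G u)) B = assoc_fun F B"
proof -
  have "(\<exists>u. inf (F l) (G u) \<in> B) \<longleftrightarrow> F l \<in> B" for l
    using assms dual_ideal_upward_closed [OF \<open>dual_ideal B\<close>] by (metis inf_le1 inf_top_right rangeE)
  then show ?thesis
    unfolding assoc_fun_re_def assoc_fun_def by simp
qed

lemma assoc_fun_im_inf:
  assumes "dual_ideal B" "top \<in> range F"
  shows "assoc_fun_im (\<lambda>l u. inf (F l) (G u)) B = assoc_fun G B"
proof -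
  have "(\<exists>l. inf (F l) (G u) \<in> B) \<longleftrightarrow> G u \<in> B" for u
    using assms dual_ideal_upward_closed [OF \<open>dual_ideal B\<close>] by (metis inf_le2 inf_top_left rangeE)
  then show ?thesis
    unfolding assoc_fun_im_def assoc_fun_def by simp
qed

theorem proposition2p17:
  fixes E1 E2 :: "real \<Rightarrow> 'a::complete_lattice"
  assumes "bounded_spectral_family E1" and "bounded_spectral_family E2"
  defines "E \<equiv> (\<lambda>l u. inf (E1 l) (E2 u))"
  shows "bounded_complex_spectral_family E \<and>
         (\<forall>B \<in> stone_spectrum.
            assoc_fun_complex E B =
              complex_of_real (assoc_fun E1 B) + \<i> * complex_of_real (assoc_fun E2 B))"
proof (intro conjI ballI)
  show "bounded_complex_spectral_family E"
    unfolding E_def using assms(1,2) by (rule bounded_complex_spectral_family_inf)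
next
  fix B :: "'a set"
  assume "B \<in> stone_spectrum"
  then have "dual_ideal B"
    unfolding stone_spectrum_def quasipoint_def by blast
  then show "assoc_fun_complex E B =
      complex_of_real (assoc_fun E1 B) + \<i> * complex_of_real (assoc_fun E2 B)"
    unfolding E_def assoc_fun_complex_def
    using assms(1,2) by (simp add: assoc_fun_re_inf assoc_fun_im_inf bounded_spectral_family_top
        complex_eq_iff)
qed

end
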